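(* Let $D$ be a delta-matroid on $E\cup\overline{E}$ for a finite set $E$. If $E=\emptyset$, then $U_D(u,v)=1$. For any $i\in E$, $$U_D(u,v)=\begin{cases}U_{D/i}(u,v)+U_{D\setminus i}(u,v)+u\,U_{D(i)}(u,v), & \text{if } i \text{ is neither a loop nor a coloop},\\ (u+v+1)\,U_{D\setminus i}(u,v), & \text{if } i \text{ is a loop or a coloop}.\end{cases}$$
   Context: For a finite $E\subseteq\{1,2,\dots\}$ let $E\cup\overline{E}$ consist of $E$ and formal copies $\overline{i}$ ($i\in E$), with involution $a\mapsto\overline{a}$; $\overline{S}=\{\overline{a}:a\in S\}$. A subset is admissible if it contains at most one of $i,\overline{i}$ for each $i$; $\operatorname{AdS}(E)$ denotes the set of admissible subsets of $E\cup\overline{E}$. In $\mathbb{R}^E$ set $e_{\overline{i}}=-e_i$, $e_S=\sum_{a\in S}e_a$. A delta-matroid on $E\cup\overline{E}$ is a nonempty collection $\mathcal{F}$ of admissible sets of size $|E|$ (feasible sets) such that $\operatorname{Conv}\{e_B:B\in\mathcal{F}\}$ has all edges parallel to some $e_i$ or $e_i\pm e_j$. Rank function: $g_D(S)=\max_{B\in\mathcal{F}}(|S\cap B|-|\overline{S}\cap B|)$. $U$-polynomial: $U_D(u,v)=\sum_{S\in\operatorname{AdS}(E)}u^{|E|-|S|}v^{(|S|-g_D(S))/2}$. For $i\in E$: $i$ is a loop if no feasible set contains $i$, a coloop if every feasible set contains $i$. If $i$ is not a loop, $D/i$ is the delta-matroid on $(E\setminus\{i\})\cup\overline{(E\setminus\{i\})}$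 with feasible sets $B\setminus\{i\}$ for feasible $B\ni i$; if $i$ is not a coloop, $D\setminus i$ has feasible sets $B\setminus\{\overline{i}\}$ for feasible $B\ni\overline{i}$; $D(i)$ has feasible sets $B\setminus\{i,\overline{i}\}$ for all feasible $B$; if $i$ is a loop or a coloop, $D/i=D\setminus i=D(i)$. *)

theory Defs
  imports "HOL-Analysis.Analysis" "HOL-Library.Function_Algebras"
begin

(* Pointwise real vector space structure on functions, so that R^E can be
   modelled as nat => real (coordinates outside E are zero). *)
instantiation "fun" :: (type, real_vector) real_vector
begin
definition scaleR_fun :: "real \<Rightarrow> ('a \<Rightarrow> 'b) \<Rightarrow> 'a \<Rightarrow> 'b"
  where "scaleR_fun c f = (\<lambda>x. c *\<^sub>R f x)"
instance
  by standard (auto simp: scaleR_fun_def fun_eq_iff scaleR_add_right scaleR_add_left)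
end

(* Elements of E \<union> \<bar>E\<close> are encoded as integers: i \<in> E is int i, its copy \<bar>i\<close>
   is - int i.  The involution is negation. *)
definition signed_ground :: "nat set \<Rightarrow> int set" where
  "signed_ground E = int ` E \<union> uminus ` int ` E"

definition admissible :: "nat set \<Rightarrow> int set \<Rightarrow> bool" where
  "admissible E S \<longleftrightarrow> S \<subseteq> signed_ground E \<and> (\<forall>a\<in>S. - a \<notin> S)"

definition AdS :: "nat set \<Rightarrow> int set set" where
  "AdS E = {S. admissible E S}"

(* e_S = sum_{a in S} e_a, with e_{bar i} = - e_i *)
definition indvec :: "int set \<Rightarrow> nat \<Rightarrow> real" where
  "indvec S = (\<lambda>j. (if int j \<in> S then 1 else 0) - (if - int j \<in> S then 1 else 0))"

definition unitvec :: "nat \<Rightarrow> nat \<Rightarrow> real" where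
  "unitvec i = (\<lambda>j. if j = i then 1 else 0)"

definition edge_directions :: "nat set \<Rightarrow> (nat \<Rightarrow> real) set" where
  "edge_directions E =
     {unitvec i | i. i \<in> E} \<union>
     {unitvec i + unitvec j | i j. i \<in> E \<and> j \<in> E \<and> i \<noteq> j} \<union>
     {unitvec i - unitvec j | i j. i \<in> E \<and> j \<in> E \<and> i \<noteq> j}"

definition is_edge :: "(nat \<Rightarrow> real) set \<Rightarrow> (nat \<Rightarrow> real) set \<Rightarrow> bool" where
  "is_edge F P \<longleftrightarrow> F face_of P \<and> (\<exists>x y. x \<noteq> y \<and> F = closed_segment x y)"

definition delta_matroid :: "nat set \<Rightarrow> int set set \<Rightarrow> bool" where
  "delta_matroid E F \<longleftrightarrow>
     finite E \<and> 0 \<notin> E \<and> F \<noteq> {} \<and>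
     (\<forall>B\<in>F. admissible E B \<and> card B = card E) \<and>
     (\<forall>Fc. is_edge Fc (convex hull (indvec ` F)) \<longrightarrow>
        (\<exists>x y. Fc = closed_segment x y \<and>
               (\<exists>d\<in>edge_directions E. \<exists>c::real. y - x = c *\<^sub>R d)))"

definition rank_dm :: "int set set \<Rightarrow> int set \<Rightarrow> int" where
  "rank_dm F S = Max ((\<lambda>B. int (card (S \<inter> B)) - int (card (uminus ` S \<inter> B))) ` F)"

definition Upoly :: "nat set \<Rightarrow> int set set \<Rightarrow> 'a::comm_ring_1 \<Rightarrow> 'a \<Rightarrow> 'a" where
  "Upoly E F u v =
     (\<Sum>S\<in>AdS E. u ^ (card E - card S) * v ^ nat ((int (card S) - rank_dm F S) div 2))"

definition is_loop :: "int set set \<Rightarrow> nat \<Rightarrow> bool" where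
  "is_loop F i \<longleftrightarrow> (\<forall>B\<in>F. int i \<notin> B)"

definition is_coloop :: "int set set \<Rightarrow> nat \<Rightarrow> bool" where
  "is_coloop F i \<longleftrightarrow> (\<forall>B\<in>F. int i \<in> B)"

definition dm_proj :: "int set set \<Rightarrow> nat \<Rightarrow> int set set" where
  "dm_proj F i = (\<lambda>B. B - {int i, - int i}) ` F"

definition dm_contract :: "int set set \<Rightarrow> nat \<Rightarrow> int set set" where
  "dm_contract F i =
     (if is_loop F i \<or> is_coloop F i then dm_proj F i
      else (\<lambda>B. B - {int i}) ` {B\<in>F. int i \<in> B})"

definition dm_delete :: "int set set \<Rightarrow> nat \<Rightarrow> int set set" where
  "dm_delete F i =
     (if is_loop F i \<or> is_coloop F i then dm_proj F i
      else (\<lambda>B. B - {- int i}) ` {B\<in>F. - int i \<in> B})"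

end

(*
  Split the admissible sets of E by their behaviour at i: a set S admissible in E - i
  appears as S, as S + i and as S + i-bar.  Since the rank of S ignores i, the terms of S
  give u times the U-polynomial of D(i).  For a in {i, i-bar} the rank of S + a is the
  maximum over feasible B of |S \<inter> B| - |S-bar \<inter> B| plus 1 or minus 1, according to
  whether a is in B.  If a lies in every feasible set this is r(S) + 1, and r(S + a-bar) is
  r(S) - 1, which yields the factor u + v + 1 for loops and coloops.  Otherwise the maximum
  is attained at a feasible set containing a, so r(S + a) is one more than the rank of S
  in D/i (for a = i) or in D\i (for a = i-bar).  This rests on
  an exchange property, the only place where the edge condition is used: a feasible set
  avoiding a has a partner containing a whose overlap with S is at most 2 smaller.  To find
  it, tilt the functional of e_S by the i-th coordinate until its maxima on the two halves
  x_i = 1 and x_i = -1 of the cube agree; among maximizers on opposite halves, a pair at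
  minimal Hamming distance spans an edge of the polytope, and an edge changes at most one
  coordinate besides i.
*)

theory Submission
  imports Defs
begin

section \<open>Edges of convex hulls of sign vectors\<close>

lemma face_of_linear_max_level:
  fixes f :: "'a::real_vector \<Rightarrow> real"
  assumes "linear f" "convex S" and le: "\<And>x. x \<in> S \<Longrightarrow> f x \<le> m"
  shows "{x \<in> S. f x = m} face_of S"
proof -
  have "convex {x \<in> S. f x = m}"
    using convex_Int[OF \<open>convex S\<close> convex_linear_vimage[OF \<open>linear f\<close> convex_singleton[of m]]]
    by (simp add: Int_def vimage_def)
  moreover have "f a = m \<and> f b = m"
    if "a \<in> S" "b \<in> S" "z \<in> open_segment a b" "f z = m" for a b z
  proof -
    obtain t where t: "0 < t" "t < 1" "z = (1 - t) *\<^sub>R a + t *\<^sub>R b"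
      using \<open>z \<in> open_segment a b\<close> by (auto simp: in_segment)
    have "f z = (1 - t) * f a + t * f b"
      unfolding t(3) linear_add[OF \<open>linear f\<close>] linear_scale[OF \<open>linear f\<close>] by simp
    then have "(1 - t) * (m - f a) + t * (m - f b) = 0"
      using \<open>f z = m\<close> by (simp add: algebra_simps)
    moreover have "(1 - t) * (m - f a) \<ge> 0" "t * (m - f b) \<ge> 0"
      using t le[OF \<open>a \<in> S\<close>] le[OF \<open>b \<in> S\<close>] by simp_all
    ultimately show ?thesis
      using t by (simp add: add_nonneg_eq_0_iff)
  qed
  ultimately show ?thesis
    unfolding face_of_def by blast
qed

lemma convex_hull_linear_max_level:
  fixes f :: "'a::real_vector \<Rightarrow> real"
  assumes "finite V" "linear f" and le: "\<And>v. v \<in> V \<Longrightarrow> f v \<le> m"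
  shows "{z \<in> convex hull V. f z = m} = convex hull {v \<in> V. f v = m}"
proof
  have "convex hull {v \<in> V. f v = m} \<subseteq> f -` {m}"
    by (rule hull_minimal) (auto intro: convex_linear_vimage[OF \<open>linear f\<close>])
  then show "convex hull {v \<in> V. f v = m} \<subseteq> {z \<in> convex hull V. f z = m}"
    using hull_mono[of "{v \<in> V. f v = m}" V] by auto
next
  show "{z \<in> convex hull V. f z = m} \<subseteq> convex hull {v \<in> V. f v = m}"
  proof
    fix z assume "z \<in> {z \<in> convex hull V. f z = m}"
    then have "z \<in> convex hull V" "f z = m"
      by auto
    then obtain w where w: "\<forall>v\<in>V. 0 \<le> w v" "sum w V = 1" "(\<Sum>v\<in>V. w v *\<^sub>R v) = z"
      using convex_hull_finite[OF \<open>finite V\<close>] by auto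
    have "f z = (\<Sum>v\<in>V. w v * f v)"
      by (simp add: w(3)[symmetric] linear_sum[OF \<open>linear f\<close>] linear_scale[OF \<open>linear f\<close>])
    then have "(\<Sum>v\<in>V. w v * (m - f v)) = 0"
      using \<open>f z = m\<close> w(2) by (simp add: right_diff_distrib sum_subtractf sum_distrib_right[symmetric])
    moreover have "\<forall>v\<in>V. 0 \<le> w v * (m - f v)"
      using w(1) le by simp
    ultimately have "\<forall>v\<in>V. w v * (m - f v) = 0"
      using sum_nonneg_eq_0_iff[OF \<open>finite V\<close>, of "\<lambda>v. w v * (m - f v)"] by simp
    then have zero: "\<forall>v\<in>V - {v \<in> V. f v = m}. w v = 0"
      by auto
    have "sum w {v \<in> V. f v = m} = 1" "(\<Sum>v\<in>{v \<in> V. f v = m}. w v *\<^sub>R v) = z"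
      using sum.mono_neutral_left[OF \<open>finite V\<close>, of "{v \<in> V. f v = m}" w]
        sum.mono_neutral_left[OF \<open>finite V\<close>, of "{v \<in> V. f v = m}" "\<lambda>v. w v *\<^sub>R v"] zero w
      by auto
    then show "z \<in> convex hull {v \<in> V. f v = m}"
      using w(1) \<open>finite V\<close> by (subst convex_hull_finite) auto
  qed
qed

lemma is_edge_if_unique_maximizers:
  fixes f :: "(nat \<Rightarrow> real) \<Rightarrow> real"
  assumes "finite V" "linear f" and le: "\<And>v. v \<in> V \<Longrightarrow> f v \<le> m"
    and "x \<in> V" "y \<in> V" "f x = m" "f y = m" "x \<noteq> y"
    and only: "\<And>v. v \<in> V \<Longrightarrow> f v = m \<Longrightarrow> v = x \<or> v = y"
  shows "is_edge (closed_segment x y) (convex hull V)"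
proof -
  have "{v \<in> V. f v = m} = {x, y}"
    using assms by auto
  then have seg: "closed_segment x y = {z \<in> convex hull V. f z = m}"
    using convex_hull_linear_max_level[OF \<open>finite V\<close> \<open>linear f\<close> le] by (simp add: segment_convex_hull)
  have "convex hull V \<subseteq> f -` {..m}"
    by (rule hull_minimal) (auto intro: convex_linear_vimage[OF \<open>linear f\<close>] le)
  then have "closed_segment x y face_of convex hull V"
    unfolding seg by (intro face_of_linear_max_level[OF \<open>linear f\<close>]) auto
  then show ?thesis
    unfolding is_edge_def using \<open>x \<noteq> y\<close> by blast
qed

definition inner_on :: "nat set \<Rightarrow> (nat \<Rightarrow> real) \<Rightarrow> (nat \<Rightarrow> real) \<Rightarrow> real" where
  "inner_on E w z = (\<Sum>k\<in>E. w k * z k)"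

definition sign_vector :: "nat set \<Rightarrow> (nat \<Rightarrow> real) \<Rightarrow> bool" where
  "sign_vector E v \<longleftrightarrow> (\<forall>k\<in>E. v k = 1 \<or> v k = -1) \<and> (\<forall>k. k \<notin> E \<longrightarrow> v k = 0)"

definition edges_in_directions :: "nat set \<Rightarrow> (nat \<Rightarrow> real) set \<Rightarrow> bool" where
  "edges_in_directions E P \<longleftrightarrow>
     (\<forall>Fc. is_edge Fc P \<longrightarrow>
        (\<exists>x y. Fc = closed_segment x y \<and> (\<exists>d\<in>edge_directions E. \<exists>c. y - x = c *\<^sub>R d)))"

lemma sign_vector_coord: "sign_vector E v \<Longrightarrow> k \<in> E \<Longrightarrow> v k = 1 \<or> v k = -1"
  by (simp add: sign_vector_def)

lemma linear_inner_on: "linear (inner_on E w)"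
  by (rule linearI)
    (simp_all add: inner_on_def scaleR_fun_def sum.distrib distrib_left sum_distrib_left mult.left_commute)

lemma sign_vector_eq_if_disagreement_minimal:
  assumes "finite E" and sign: "sign_vector E v" "sign_vector E x" "sign_vector E y"
    and sub: "{k\<in>E. v k \<noteq> y k} \<subseteq> {k\<in>E. x k \<noteq> y k}"
    and le: "card {k\<in>E. x k \<noteq> y k} \<le> card {k\<in>E. v k \<noteq> y k}"
  shows "v = x"
proof
  have same: "{k\<in>E. v k \<noteq> y k} = {k\<in>E. x k \<noteq> y k}"
    using card_subset_eq[OF _ sub] card_mono[OF _ sub] le \<open>finite E\<close> by simp
  fix k
  show "v k = x k"
  proof (cases "k \<in> E")
    case True
    then have "v k \<noteq> y k \<longleftrightarrow> x k \<noteq> y k"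
      using same by blast
    then show ?thesis
      using sign_vector_coord[OF sign(1) True] sign_vector_coord[OF sign(2) True]
        sign_vector_coord[OF sign(3) True] by auto
  next
    case False
    then show ?thesis
      using sign unfolding sign_vector_def by simp
  qed
qed

lemma inner_on_add_sign_vectors:
  assumes "finite E" and sign: "sign_vector E x" "sign_vector E y" "sign_vector E v"
  shows "inner_on E (x + y) v \<le> (\<Sum>k\<in>E. if x k = y k then 2 else 0)"
    and "inner_on E (x + y) v = (\<Sum>k\<in>E. if x k = y k then 2 else 0)
           \<longleftrightarrow> (\<forall>k\<in>E. x k = y k \<longrightarrow> v k = x k)"
proof -
  have term_le: "(x k + y k) * v k \<le> (if x k = y k then 2 else 0)"
    and term_eq: "(x k + y k) * v k = (if x k = y k then 2 else 0) \<longleftrightarrow> (x k = y k \<longrightarrow> v k = x k)"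
    if "k \<in> E" for k
    using sign_vector_coord[OF sign(1) that] sign_vector_coord[OF sign(2) that]
      sign_vector_coord[OF sign(3) that] by auto
  show "inner_on E (x + y) v \<le> (\<Sum>k\<in>E. if x k = y k then 2 else 0)"
    unfolding inner_on_def plus_fun_apply by (rule sum_mono) (rule term_le)
  show "inner_on E (x + y) v = (\<Sum>k\<in>E. if x k = y k then 2 else 0)
          \<longleftrightarrow> (\<forall>k\<in>E. x k = y k \<longrightarrow> v k = x k)"
  proof
    assume eq: "inner_on E (x + y) v = (\<Sum>k\<in>E. if x k = y k then 2 else 0)"
    have "(x k + y k) * v k = (if x k = y k then 2 else 0)" if "k \<in> E" for k
      by (rule sum_mono_inv[where f = "\<lambda>k. (x k + y k) * v k"])
        (use eq term_le that \<open>finite E\<close> in \<open>auto simp: inner_on_def\<close>)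
    then show "\<forall>k\<in>E. x k = y k \<longrightarrow> v k = x k"
      using term_eq by blast
  next
    assume "\<forall>k\<in>E. x k = y k \<longrightarrow> v k = x k"
    then show "inner_on E (x + y) v = (\<Sum>k\<in>E. if x k = y k then 2 else 0)"
      unfolding inner_on_def plus_fun_apply using term_eq by (intro sum.cong) auto
  qed
qed

lemma edge_between_maximizers:
  fixes V :: "(nat \<Rightarrow> real) set" and f :: "(nat \<Rightarrow> real) \<Rightarrow> real"
  assumes "finite E" "finite V" and sign: "\<And>v. v \<in> V \<Longrightarrow> sign_vector E v"
    and "linear f" and le: "\<And>v. v \<in> V \<Longrightarrow> f v \<le> m"
    and "a \<in> V" "f a = m" "a \<in> A" "b \<in> V" "f b = m" "b \<notin> A"
  obtains x y where "x \<in> V" "f x = m" "x \<in> A" "y \<in> V" "f y = m" "y \<notin> A"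
    "is_edge (closed_segment x y) (convex hull V)"
proof -
  define P where "P = {(x, y). x \<in> V \<and> f x = m \<and> x \<in> A \<and> y \<in> V \<and> f y = m \<and> y \<notin> A}"
  define disagreement where "disagreement = (\<lambda>(x, y). card {k\<in>E. x k \<noteq> (y::nat \<Rightarrow> real) k})"
  have "(a, b) \<in> P"
    using assms by (simp add: P_def)
  then obtain x y where "(x, y) \<in> P" and least: "\<And>p. p \<in> P \<Longrightarrow> disagreement (x, y) \<le> disagreement p"
    using ex_has_least_nat[of "\<lambda>p. p \<in> P" "(a, b)" disagreement] by auto
  then have x: "x \<in> V" "f x = m" "x \<in> A" and y: "y \<in> V" "f y = m" "y \<notin> A"
    by (auto simp: P_def)
  note pair = inner_on_add_sign_vectors[OF \<open>finite E\<close> sign[OF x(1)] sign[OF y(1)] sign]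
  \<comment> \<open>Minimality of the disagreement makes \<open>x\<close> and \<open>y\<close> the only maximizers of \<open>f + \<langle>x + y, -\<rangle>\<close>.\<close>
  define C where "C = (\<Sum>k\<in>E. if x k = y k then 2 else (0::real))"
  define g where "g = (\<lambda>v. f v + inner_on E (x + y) v)"
  have g_le: "g v \<le> m + C" if "v \<in> V" for v
    using le[OF that] pair(1)[OF that] by (simp add: g_def C_def)
  have g_max: "g x = m + C" "g y = m + C"
    using x y pair(2)[OF x(1)] pair(2)[OF y(1)] by (simp_all add: g_def C_def)
  have only: "v = x \<or> v = y" if "v \<in> V" "g v = m + C" for v
  proof -
    have "f v = m" and agree: "\<forall>k\<in>E. x k = y k \<longrightarrow> v k = x k"
      using that le[OF that(1)] pair[OF that(1)] by (auto simp: g_def C_def)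
    show ?thesis
    proof (cases "v \<in> A")
      case True
      then have "(v, y) \<in> P"
        using \<open>f v = m\<close> that y by (simp add: P_def)
      then have "v = x"
        using least[of "(v, y)"] agree
        by (intro sign_vector_eq_if_disagreement_minimal[OF \<open>finite E\<close> sign sign[OF x(1)] sign[OF y(1)]])
          (auto simp: disagreement_def that)
      then show ?thesis ..
    next
      case False
      then have "(x, v) \<in> P"
        using \<open>f v = m\<close> that x by (simp add: P_def)
      then have "card {k\<in>E. y k \<noteq> x k} \<le> card {k\<in>E. v k \<noteq> x k}"
        using least[of "(x, v)"] by (simp add: disagreement_def eq_commute)
      then have "v = y"
        using agree
        by (intro sign_vector_eq_if_disagreement_minimal[OF \<open>finite E\<close> sign sign[OF y(1)] sign[OF x(1)]])
          (auto simp: that)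
      then show ?thesis ..
    qed
  qed
  have "x \<noteq> y"
    using x(3) y(3) by auto
  have "linear g"
    unfolding g_def using \<open>linear f\<close> linear_inner_on by (rule linear_compose_add)
  then have "is_edge (closed_segment x y) (convex hull V)"
    using is_edge_if_unique_maximizers[OF \<open>finite V\<close> _ g_le x(1) y(1) g_max \<open>x \<noteq> y\<close> only] by blast
  then show ?thesis
    using that x y by blast
qed

lemma edge_endpoints_agree_off_two:
  assumes "edges_in_directions E P" "is_edge (closed_segment x y) P" "x i \<noteq> y i"
  obtains j where "\<And>k. k \<noteq> i \<Longrightarrow> k \<noteq> j \<Longrightarrow> x k = y k"
proof -
  obtain a b d c where seg: "closed_segment x y = closed_segment a b"
    and "d \<in> edge_directions E" and dir: "b - a = c *\<^sub>R d"
    using assms(1,2) unfolding edges_in_directions_def by blast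
  have "\<exists>p q. \<forall>k. k \<noteq> p \<and> k \<noteq> q \<longrightarrow> d k = 0"
    using \<open>d \<in> edge_directions E\<close> unfolding edge_directions_def unitvec_def by auto blast+
  then obtain p q where support: "\<And>k. k \<noteq> p \<Longrightarrow> k \<noteq> q \<Longrightarrow> d k = 0"
    by blast
  have const: "z k = a k" if z: "z \<in> closed_segment a b" and k: "k \<noteq> p" "k \<noteq> q" for z k
  proof -
    obtain t where "z = (1 - t) *\<^sub>R a + t *\<^sub>R b"
      using z by (auto simp: in_segment)
    moreover have "b k = a k"
      using fun_cong[OF dir, of k] support[OF k] by (simp add: scaleR_fun_def)
    ultimately show ?thesis
      by (simp add: scaleR_fun_def algebra_simps)
  qed
  have agree: "x k = y k" if "k \<noteq> p" "k \<noteq> q" for k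
    using const[of x k] const[of y k] that seg by (metis ends_in_segment)
  then have "i = p \<or> i = q"
    using \<open>x i \<noteq> y i\<close> by blast
  then show ?thesis
    using that agree by blast
qed

lemma inner_on_le_if_agree_off_two:
  assumes "finite E" "sign_vector E x" "sign_vector E y"
    and "s i = 0" "\<And>k. \<bar>s k\<bar> \<le> 1" and agree: "\<And>k. k \<noteq> i \<Longrightarrow> k \<noteq> j \<Longrightarrow> x k = y k"
  shows "inner_on E s x \<le> inner_on E s y + 2"
proof -
  have "s k * (x k - y k) = (if k = j then s j * (x j - y j) else 0)" for k
    using \<open>s i = 0\<close> agree[of k] by (cases "k = i") auto
  then have "inner_on E s x - inner_on E s y = (\<Sum>k\<in>E. if k = j then s j * (x j - y j) else 0)"
    by (simp add: inner_on_def sum_subtractf[symmetric] right_diff_distrib[symmetric])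
  also have "\<dots> \<le> 2"
  proof (cases "j \<in> E")
    case True
    have "\<bar>x j - y j\<bar> \<le> 2"
      using sign_vector_coord[OF assms(2) True] sign_vector_coord[OF assms(3) True] by auto
    then have "\<bar>s j * (x j - y j)\<bar> \<le> 1 * 2"
      unfolding abs_mult by (intro mult_mono) (simp_all add: assms(5))
    then show ?thesis
      using \<open>finite E\<close> True by simp
  qed (use \<open>finite E\<close> in simp)
  finally show ?thesis
    by simp
qed

lemma sign_vectors_exchange:
  assumes "finite E" "finite V" and sign: "\<And>v. v \<in> V \<Longrightarrow> sign_vector E v"
    and edges: "edges_in_directions E (convex hull V)"
    and "i \<in> E" "s i = 0" "\<And>k. \<bar>s k\<bar> \<le> 1" "x \<in> V" "z \<in> V" "z i \<noteq> x i"
  obtains y where "y \<in> V" "y i \<noteq> x i" "inner_on E s x \<le> inner_on E s y + 2"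
proof -
  define Vx where "Vx = {v \<in> V. v i = x i}"
  define Vy where "Vy = {v \<in> V. v i \<noteq> x i}"
  have "finite Vx" "Vx \<noteq> {}" "finite Vy" "Vy \<noteq> {}"
    using assms by (auto simp: Vx_def Vy_def)
  then obtain a b where a: "a \<in> Vx" "Max (inner_on E s ` Vx) = inner_on E s a"
    and b: "b \<in> Vy" "Max (inner_on E s ` Vy) = inner_on E s b"
    by (meson obtains_MAX)
  define \<mu> where "\<mu> = inner_on E s a"
  define \<nu> where "\<nu> = inner_on E s b"
  have a_max: "inner_on E s v \<le> \<mu>" if "v \<in> Vx" for v
    using Max_ge[OF finite_imageI[OF \<open>finite Vx\<close>] imageI[OF that], of "inner_on E s"] a(2)
    by (simp add: \<mu>_def)
  have b_max: "inner_on E s v \<le> \<nu>" if "v \<in> Vy" for v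
    using Max_ge[OF finite_imageI[OF \<open>finite Vy\<close>] imageI[OF that], of "inner_on E s"] b(2)
    by (simp add: \<nu>_def)
  have x_sq: "x i * x i = 1"
    using sign_vector_coord[OF sign[OF \<open>x \<in> V\<close>] \<open>i \<in> E\<close>] by auto
  have flip: "v i = - x i" if "v \<in> V" "v i \<noteq> x i" for v
    using sign_vector_coord[OF sign[OF that(1)] \<open>i \<in> E\<close>]
      sign_vector_coord[OF sign[OF \<open>x \<in> V\<close>] \<open>i \<in> E\<close>] that(2) by auto
  \<comment> \<open>The tilt by the \<open>i\<close>-th coordinate equalises the maxima over \<open>Vx\<close> and \<open>Vy\<close>.\<close>
  define f where "f = (\<lambda>v. 2 * inner_on E s v + (\<nu> - \<mu>) * x i * v i)"
  have "linear f"
    unfolding f_def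
    by (rule linearI) (simp_all add: inner_on_def scaleR_fun_def sum.distrib sum_distrib_left algebra_simps)
  have f_side: "f v = 2 * inner_on E s v + (\<nu> - \<mu>)" if "v \<in> Vx" for v
    using that x_sq by (simp add: f_def Vx_def algebra_simps)
  have f_other: "f v = 2 * inner_on E s v - (\<nu> - \<mu>)" if "v \<in> Vy" for v
    using that x_sq flip[of v] by (simp add: f_def Vy_def algebra_simps)
  have f_le: "f v \<le> \<mu> + \<nu>" if "v \<in> V" for v
  proof (cases "v i = x i")
    case True
    then show ?thesis
      using f_side[of v] a_max[of v] that by (simp add: Vx_def)
  next
    case False
    then show ?thesis
      using f_other[of v] b_max[of v] that by (simp add: Vy_def)
  qed
  have f_max: "f a = \<mu> + \<nu>" "f b = \<mu> + \<nu>"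
    using f_side[OF a(1)] f_other[OF b(1)] by (simp_all add: \<mu>_def \<nu>_def)
  have sides: "a \<in> V" "a \<in> {v. v i = x i}" "b \<in> V" "b \<notin> {v. v i = x i}"
    using a(1) b(1) by (simp_all add: Vx_def Vy_def)
  obtain p q where p: "p \<in> V" "f p = \<mu> + \<nu>" "p \<in> {v. v i = x i}"
    and q: "q \<in> V" "f q = \<mu> + \<nu>" "q \<notin> {v. v i = x i}"
    and edge: "is_edge (closed_segment p q) (convex hull V)"
    by (rule edge_between_maximizers[OF \<open>finite E\<close> \<open>finite V\<close> sign \<open>linear f\<close> f_le
          sides(1) f_max(1) sides(2) sides(3) f_max(2) sides(4)])
  then have at_max: "inner_on E s p = \<mu>" "inner_on E s q = \<nu>"
    using f_side[of p] f_other[of q] by (simp_all add: Vx_def Vy_def)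
  have "p i \<noteq> q i"
    using p(3) q(3) by simp
  then obtain j where agree: "\<And>k. k \<noteq> i \<Longrightarrow> k \<noteq> j \<Longrightarrow> p k = q k"
    using edge_endpoints_agree_off_two[OF edges edge] by blast
  then have "\<mu> \<le> \<nu> + 2"
    using \<open>finite E\<close> sign p(1) q(1) \<open>s i = 0\<close> assms(7) at_max
    by (metis inner_on_le_if_agree_off_two)
  moreover have "inner_on E s x \<le> \<mu>"
    using a_max \<open>x \<in> V\<close> by (simp add: Vx_def)
  ultimately show ?thesis
    using that[of b] b(1) unfolding Vy_def \<nu>_def by auto
qed

section \<open>The exchange property of delta-matroids\<close>

lemma signed_ground_finite: "finite E \<Longrightarrow> finite (signed_ground E)"
  by (simp add: signed_ground_def)

lemma signed_groundE:
  assumes "a \<in> signed_ground E"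
  obtains k where "k \<in> E" "a = int k" | k where "k \<in> E" "a = - int k"
  using assms unfolding signed_ground_def by blast

lemma int_eq_neg_int_iff [simp]:
  "int a = - int b \<longleftrightarrow> a = 0 \<and> b = 0" "- int a = int b \<longleftrightarrow> a = 0 \<and> b = 0"
  by linarith+

lemma int_in_signed_ground_iff: "0 \<notin> E \<Longrightarrow> int k \<in> signed_ground E \<longleftrightarrow> k \<in> E"
  unfolding signed_ground_def by (auto simp: image_iff)

lemma neg_int_in_signed_ground_iff: "0 \<notin> E \<Longrightarrow> - int k \<in> signed_ground E \<longleftrightarrow> k \<in> E"
  unfolding signed_ground_def by (auto simp: image_iff)

lemma signed_ground_Diff_singleton: "signed_ground (E - {i}) = signed_ground E - {int i, - int i}"
  unfolding signed_ground_def by force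

lemma card_signed_subset:
  assumes "finite E" "0 \<notin> E" "A \<subseteq> signed_ground E"
  shows "of_nat (card A) = (\<Sum>k\<in>E. of_bool (int k \<in> A) + of_bool (- int k \<in> A) :: 'a::comm_semiring_1)"
proof -
  define Apos where "Apos = {k\<in>E. int k \<in> A}"
  define Aneg where "Aneg = {k\<in>E. - int k \<in> A}"
  have split: "A = int ` Apos \<union> (\<lambda>k. - int k) ` Aneg"
  proof (intro equalityI subsetI)
    fix a assume "a \<in> A"
    then have "a \<in> signed_ground E"
      using assms(3) by blast
    then show "a \<in> int ` Apos \<union> (\<lambda>k. - int k) ` Aneg"
      by (rule signed_groundE) (use \<open>a \<in> A\<close> in \<open>auto simp: Apos_def Aneg_def\<close>)
  qed (auto simp: Apos_def Aneg_def)
  have "int ` Apos \<inter> (\<lambda>k. - int k) ` Aneg = {}"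
    using assms(2) by (auto simp: Apos_def Aneg_def)
  then have "card A = card Apos + card Aneg"
    unfolding split using assms(1)
    by (subst card_Un_disjoint) (auto simp: card_image inj_on_def Apos_def Aneg_def)
  then show ?thesis
    using assms(1) by (simp add: Apos_def Aneg_def sum.distrib sum_of_bool_eq Int_def)
qed

lemma AdS_finite_card_le:
  assumes "finite E" "0 \<notin> E" "S \<in> AdS E"
  shows "finite S" "card S \<le> card E"
proof -
  have adm: "S \<subseteq> signed_ground E" "\<forall>a\<in>S. - a \<notin> S"
    using assms(3) by (simp_all add: AdS_def admissible_def)
  then show "finite S"
    using assms(1) finite_subset signed_ground_finite by blast
  have "card S = (\<Sum>k\<in>E. of_bool (int k \<in> S) + of_bool (- int k \<in> S) :: nat)"
    using card_signed_subset[OF assms(1,2) adm(1), where 'a = nat] by simp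
  also have "\<dots> \<le> (\<Sum>k\<in>E. 1)"
    using adm(2) by (intro sum_mono) auto
  finally show "card S \<le> card E"
    by simp
qed

lemma delta_matroid_finite:
  assumes "delta_matroid E F"
  shows "finite F"
proof -
  have "F \<subseteq> Pow (signed_ground E)" "finite E"
    using assms by (auto simp: delta_matroid_def admissible_def)
  then show ?thesis
    by (meson finite_Pow_iff finite_subset signed_ground_finite)
qed

lemma delta_matroid_finite_feasible:
  assumes "delta_matroid E F" "B \<in> F"
  shows "finite B"
proof -
  have "B \<subseteq> signed_ground E" "finite E"
    using assms by (auto simp: delta_matroid_def admissible_def)
  then show ?thesis
    using finite_subset signed_ground_finite by blast
qed

lemma feasible_signed_transversal:
  assumes dm: "delta_matroid E F" and "B \<in> F" "a \<in> signed_ground E"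
  shows "a \<in> B \<longleftrightarrow> - a \<notin> B"
proof -
  have "finite E" "0 \<notin> E" "admissible E B" "card B = card E"
    using dm \<open>B \<in> F\<close> by (auto simp: delta_matroid_def)
  then have adm: "of_bool (int k \<in> B) + of_bool (- int k \<in> B) \<le> (1::nat)" for k
    by (auto simp: admissible_def)
  have "(\<Sum>k\<in>E. of_bool (int k \<in> B) + of_bool (- int k \<in> B)) = (\<Sum>k\<in>E. 1::nat)"
    using card_signed_subset[OF \<open>finite E\<close> \<open>0 \<notin> E\<close>, of B, where 'a = nat]
      \<open>admissible E B\<close> \<open>card B = card E\<close>
    by (auto simp: admissible_def)
  then have one: "of_bool (int k \<in> B) + of_bool (- int k \<in> B) = (1::nat)" if "k \<in> E" for k
    by (rule sum_mono_inv) (use adm that \<open>finite E\<close> in auto)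
  have "int k \<in> B \<longleftrightarrow> - int k \<notin> B" if "k \<in> E" for k
    using one[OF that] by (cases "int k \<in> B"; cases "- int k \<in> B") auto
  then show ?thesis
    using \<open>a \<in> signed_ground E\<close> by (elim signed_groundE) auto
qed

lemma indvec_feasible:
  assumes "delta_matroid E F" "B \<in> F" "k \<in> E"
  shows "indvec B k = (if int k \<in> B then 1 else -1)"
proof -
  have "k \<noteq> 0"
    using assms by (auto simp: delta_matroid_def)
  moreover have "int k \<in> signed_ground E"
    using \<open>k \<in> E\<close> by (simp add: signed_ground_def)
  ultimately show ?thesis
    using feasible_signed_transversal[OF assms(1,2)] by (auto simp: indvec_def)
qed

lemma sign_vector_indvec_feasible:
  assumes "delta_matroid E F" "B \<in> F"
  shows "sign_vector E (indvec B)"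
proof -
  have "0 \<notin> E" "B \<subseteq> signed_ground E"
    using assms by (auto simp: delta_matroid_def admissible_def)
  then have "int k \<notin> B" "- int k \<notin> B" if "k \<notin> E" for k
    using that int_in_signed_ground_iff neg_int_in_signed_ground_iff by blast+
  then show ?thesis
    using indvec_feasible[OF assms] by (simp add: sign_vector_def indvec_def)
qed

definition signed_overlap :: "int set \<Rightarrow> int set \<Rightarrow> int" where
  "signed_overlap S B = int (card (S \<inter> B)) - int (card (uminus ` S \<inter> B))"

lemma rank_dm_eq_Max: "rank_dm F S = Max (signed_overlap S ` F)"
  by (simp add: rank_dm_def signed_overlap_def)

lemma signed_overlap_eq_inner_on:
  assumes "finite E" "0 \<notin> E" "S \<subseteq> signed_ground E" "B \<subseteq> signed_ground E"
  shows "real_of_int (signed_overlap S B) = inner_on E (indvec S) (indvec B)"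
proof -
  have neg: "a \<in> uminus ` S \<longleftrightarrow> - a \<in> S" for a :: int
    by force
  have "real_of_int (signed_overlap S B) = real (card (S \<inter> B)) - real (card (uminus ` S \<inter> B))"
    by (simp add: signed_overlap_def)
  also have "\<dots> = (\<Sum>k\<in>E. (of_bool (int k \<in> S \<inter> B) + of_bool (- int k \<in> S \<inter> B)) -
      (of_bool (int k \<in> uminus ` S \<inter> B) + of_bool (- int k \<in> uminus ` S \<inter> B)))"
    using assms by (simp add: card_signed_subset[OF assms(1,2)] sum_subtractf subset_iff)
  also have "\<dots> = inner_on E (indvec S) (indvec B)"
    unfolding inner_on_def indvec_def by (intro sum.cong) (auto simp: neg)
  finally show ?thesis .
qed

lemma delta_matroid_exchange:
  assumes dm: "delta_matroid E F" and "a \<in> signed_ground E" "S \<subseteq> signed_ground E" "a \<notin> S" "- a \<notin> S"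
    and "B \<in> F" "a \<notin> B" "B' \<in> F" "a \<in> B'"
  obtains B'' where "B'' \<in> F" "a \<in> B''" "signed_overlap S B \<le> signed_overlap S B'' + 2"
proof -
  have "finite E" "0 \<notin> E"
    using dm by (auto simp: delta_matroid_def)
  have V: "finite (indvec ` F)" "\<And>v. v \<in> indvec ` F \<Longrightarrow> sign_vector E v"
    "edges_in_directions E (convex hull (indvec ` F))"
    using delta_matroid_finite[OF dm] sign_vector_indvec_feasible[OF dm] dm
    by (auto simp: delta_matroid_def edges_in_directions_def)
  obtain i where "i \<in> E" and a: "a = int i \<or> a = - int i"
    using \<open>a \<in> signed_ground E\<close> by (metis signed_groundE)
  have side: "indvec C i \<noteq> indvec B i \<longleftrightarrow> a \<in> C" if "C \<in> F" for C
    using a \<open>a \<notin> B\<close> feasible_signed_transversal[OF dm _ \<open>a \<in> signed_ground E\<close>] that \<open>B \<in> F\<close>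
      indvec_feasible[OF dm _ \<open>i \<in> E\<close>] by auto
  have S_i: "indvec S i = 0"
    using a \<open>a \<notin> S\<close> \<open>- a \<notin> S\<close> by (auto simp: indvec_def)
  have S_bound: "\<bar>indvec S k\<bar> \<le> 1" for k
    by (simp add: indvec_def)
  have "indvec B' i \<noteq> indvec B i"
    using side \<open>B' \<in> F\<close> \<open>a \<in> B'\<close> by blast
  then obtain y where "y \<in> indvec ` F" "y i \<noteq> indvec B i"
    and le: "inner_on E (indvec S) (indvec B) \<le> inner_on E (indvec S) y + 2"
    using sign_vectors_exchange[where s = "indvec S", OF \<open>finite E\<close> V \<open>i \<in> E\<close> S_i S_bound
        imageI[OF \<open>B \<in> F\<close>, of indvec] imageI[OF \<open>B' \<in> F\<close>, of indvec]] by blast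
  then obtain B'' where B'': "B'' \<in> F" "a \<in> B''" "y = indvec B''"
    using side by blast
  have overlap: "real_of_int (signed_overlap S C) = inner_on E (indvec S) (indvec C)" if "C \<in> F" for C
    using dm that \<open>S \<subseteq> signed_ground E\<close>
    by (intro signed_overlap_eq_inner_on[OF \<open>finite E\<close> \<open>0 \<notin> E\<close>])
      (auto simp: delta_matroid_def admissible_def)
  have "real_of_int (signed_overlap S B) \<le> real_of_int (signed_overlap S B'') + 2"
    using le B'' overlap[OF \<open>B \<in> F\<close>] overlap[OF \<open>B'' \<in> F\<close>] by simp
  then have "signed_overlap S B \<le> signed_overlap S B'' + 2"
    by linarith
  then show ?thesis
    using that B'' by blast
qed

section \<open>The rank function\<close>

lemma rank_dm_image_Diff:
  assumes "X \<inter> S = {}" "X \<inter> uminus ` S = {}"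
  shows "rank_dm ((\<lambda>B. B - X) ` G) S = rank_dm G S"
proof -
  have "signed_overlap S (B - X) = signed_overlap S B" for B
  proof -
    have "S \<inter> (B - X) = S \<inter> B" "uminus ` S \<inter> (B - X) = uminus ` S \<inter> B"
      using assms by blast+
    then show ?thesis
      by (simp add: signed_overlap_def)
  qed
  then show ?thesis
    by (simp add: rank_dm_eq_Max image_image)
qed

lemma rank_dm_proj:
  assumes "int i \<notin> S" "- int i \<notin> S"
  shows "rank_dm (dm_proj F i) S = rank_dm F S"
  unfolding dm_proj_def using assms by (intro rank_dm_image_Diff) force+

lemma rank_dm_minor:
  assumes "a \<notin> S" "- a \<notin> S"
  shows "rank_dm ((\<lambda>B. B - {a}) ` {B \<in> F. a \<in> B}) S = rank_dm {B \<in> F. a \<in> B} S"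
  using assms by (intro rank_dm_image_Diff) force+

lemma signed_overlap_insert:
  assumes "a \<notin> S" "- a \<notin> S" "finite B" "a \<in> B \<longleftrightarrow> - a \<notin> B"
  shows "signed_overlap (insert a S) B = signed_overlap S B + (if a \<in> B then 1 else -1)"
proof (cases "a \<in> B")
  case True
  then have "insert a S \<inter> B = insert a (S \<inter> B)" "uminus ` insert a S \<inter> B = uminus ` S \<inter> B"
    using assms(4) by auto
  then show ?thesis
    using True assms(1,3) by (simp add: signed_overlap_def)
next
  case False
  then have "insert a S \<inter> B = S \<inter> B" "uminus ` insert a S \<inter> B = insert (- a) (uminus ` S \<inter> B)"
    using assms(4) by auto
  moreover have "- a \<notin> uminus ` S"
    using assms(1) by auto
  ultimately show ?thesis
    using False assms(3) by (simp add: signed_overlap_def)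
qed

lemma rank_dm_insert:
  assumes dm: "delta_matroid E F" and "a \<in> signed_ground E" "a \<notin> S" "- a \<notin> S"
  shows "rank_dm F (insert a S) = Max ((\<lambda>B. signed_overlap S B + (if a \<in> B then 1 else -1)) ` F)"
proof -
  have "signed_overlap (insert a S) B = signed_overlap S B + (if a \<in> B then 1 else -1)" if "B \<in> F" for B
  proof (rule signed_overlap_insert[OF assms(3,4)])
    show "finite B"
      using that delta_matroid_finite_feasible[OF dm] by blast
    show "a \<in> B \<longleftrightarrow> - a \<notin> B"
      by (rule feasible_signed_transversal[OF dm that \<open>a \<in> signed_ground E\<close>])
  qed
  then show ?thesis
    unfolding rank_dm_eq_Max by (intro arg_cong[where f = Max] image_cong) simp_all
qed

lemma rank_dm_insert_mixed:
  assumes dm: "delta_matroid E F" and "a \<in> signed_ground E" "S \<subseteq> signed_ground E" "a \<notin> S" "- a \<notin> S"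
    and "B\<^sub>1 \<in> F" "a \<in> B\<^sub>1" "B\<^sub>0 \<in> F" "a \<notin> B\<^sub>0"
  shows "rank_dm F (insert a S) = rank_dm {B \<in> F. a \<in> B} S + 1"
proof -
  define Fa where "Fa = {B \<in> F. a \<in> B}"
  have "finite Fa" "Fa \<noteq> {}"
    using delta_matroid_finite[OF dm] assms(6,7) by (auto simp: Fa_def)
  then obtain B' where B': "B' \<in> Fa" "rank_dm Fa S = signed_overlap S B'"
    unfolding rank_dm_eq_Max by (meson obtains_MAX)
  have le: "signed_overlap S B \<le> rank_dm Fa S" if "B \<in> Fa" for B
    unfolding rank_dm_eq_Max using \<open>finite Fa\<close> that by simp
  have "Max ((\<lambda>B. signed_overlap S B + (if a \<in> B then 1 else -1)) ` F) = rank_dm Fa S + 1"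
  proof (rule Max_eqI)
    show "finite ((\<lambda>B. signed_overlap S B + (if a \<in> B then 1 else -1)) ` F)"
      using delta_matroid_finite[OF dm] by simp
    show "rank_dm Fa S + 1 \<in> (\<lambda>B. signed_overlap S B + (if a \<in> B then 1 else -1)) ` F"
      using B' by (auto simp: Fa_def intro!: image_eqI[of _ _ B'])
  next
    fix y assume "y \<in> (\<lambda>B. signed_overlap S B + (if a \<in> B then 1 else -1)) ` F"
    then obtain B where B: "B \<in> F" "y = signed_overlap S B + (if a \<in> B then 1 else -1)"
      by blast
    show "y \<le> rank_dm Fa S + 1"
    proof (cases "a \<in> B")
      case True
      then show ?thesis
        using B le[of B] by (simp add: Fa_def)
    next
      case False
      then obtain B'' where "B'' \<in> F" "a \<in> B''" "signed_overlap S B \<le> signed_overlap S B'' + 2"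
        using delta_matroid_exchange[OF dm assms(2-5) \<open>B \<in> F\<close> _ assms(6,7)] by blast
      then show ?thesis
        using B False le[of B''] by (simp add: Fa_def)
    qed
  qed
  then show ?thesis
    using rank_dm_insert[OF dm assms(2,4,5)] by (simp add: Fa_def)
qed

lemma rank_dm_insert_forced:
  assumes dm: "delta_matroid E F" and "a \<in> signed_ground E" "a \<notin> S" "- a \<notin> S"
    and forced: "\<forall>B\<in>F. a \<in> B"
  shows "rank_dm F (insert a S) = rank_dm F S + 1"
    and "rank_dm F (insert (- a) S) = rank_dm F S - 1"
proof -
  have "finite F" "F \<noteq> {}"
    using dm delta_matroid_finite by (auto simp: delta_matroid_def)
  have "rank_dm F (insert a S) = Max ((\<lambda>B. signed_overlap S B + 1) ` F)"
    unfolding rank_dm_insert[OF assms(1-4)] using forced by (intro arg_cong[where f = Max] image_cong) simp_all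
  then show "rank_dm F (insert a S) = rank_dm F S + 1"
    unfolding rank_dm_eq_Max using Max_add_commute[OF \<open>finite F\<close> \<open>F \<noteq> {}\<close>] by simp
  have neg: "- a \<in> signed_ground E" "- (- a) \<notin> S"
    using \<open>a \<in> signed_ground E\<close> \<open>a \<notin> S\<close> by (auto simp: signed_ground_def)
  have "- a \<notin> B" if "B \<in> F" for B
    using feasible_signed_transversal[OF dm that \<open>a \<in> signed_ground E\<close>] forced that by blast
  then have "rank_dm F (insert (- a) S) = Max ((\<lambda>B. signed_overlap S B + (- 1)) ` F)"
    unfolding rank_dm_insert[OF dm neg(1) assms(4) neg(2)]
    by (intro arg_cong[where f = Max] image_cong) simp_all
  then show "rank_dm F (insert (- a) S) = rank_dm F S - 1"
    unfolding rank_dm_eq_Max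
    using Max_add_commute[OF \<open>finite F\<close> \<open>F \<noteq> {}\<close>, of "signed_overlap S" "- 1"] by simp
qed

lemma rank_dm_le_card:
  assumes "finite G" "G \<noteq> {}" "finite S"
  shows "rank_dm G S \<le> int (card S)"
proof -
  have "signed_overlap S B \<le> int (card S)" for B
    using card_mono[OF \<open>finite S\<close>, of "S \<inter> B"] by (simp add: signed_overlap_def)
  then show ?thesis
    unfolding rank_dm_eq_Max using assms by simp
qed

section \<open>Deletion and contraction\<close>

lemma finite_AdS: "finite E \<Longrightarrow> finite (AdS E)"
  by (rule finite_subset[of _ "Pow (signed_ground E)"])
    (auto simp: AdS_def admissible_def signed_ground_finite)

lemma AdS_Diff_singletonD:
  assumes "S \<in> AdS (E - {i})"
  shows "S \<subseteq> signed_ground E" "int i \<notin> S" "- int i \<notin> S"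
  using assms by (auto simp: AdS_def admissible_def signed_ground_Diff_singleton)

lemma AdS_split_element:
  assumes "0 \<notin> E" "i \<in> E"
  shows "AdS E = AdS (E - {i}) \<union> insert (int i) ` AdS (E - {i}) \<union> insert (- int i) ` AdS (E - {i})"
proof (intro equalityI subsetI)
  fix S assume S: "S \<in> AdS E"
  then have adm: "\<forall>a\<in>S. - a \<notin> S"
    by (simp add: AdS_def admissible_def)
  consider "int i \<in> S" | "- int i \<in> S" | "int i \<notin> S" "- int i \<notin> S"
    by blast
  then show "S \<in> AdS (E - {i}) \<union> insert (int i) ` AdS (E - {i}) \<union> insert (- int i) ` AdS (E - {i})"
  proof cases
    case 1
    then have "S - {int i} \<in> AdS (E - {i})" "S = insert (int i) (S - {int i})"
      using S adm by (auto simp: AdS_def admissible_def signed_ground_Diff_singleton)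
    then show ?thesis
      by blast
  next
    case 2
    then have "S - {- int i} \<in> AdS (E - {i})" "S = insert (- int i) (S - {- int i})"
      using S adm by (force simp: AdS_def admissible_def signed_ground_Diff_singleton)+
    then show ?thesis
      by blast
  next
    case 3
    then show ?thesis
      using S by (auto simp: AdS_def admissible_def signed_ground_Diff_singleton)
  qed
next
  have "i \<noteq> 0"
    using assms by metis
  moreover have "int i \<in> signed_ground E" "- int i \<in> signed_ground E"
    using assms by (auto simp: signed_ground_def)
  ultimately
  show "S \<in> AdS E"
    if "S \<in> AdS (E - {i}) \<union> insert (int i) ` AdS (E - {i}) \<union> insert (- int i) ` AdS (E - {i})" for S
    using that by (auto simp: AdS_def admissible_def signed_ground_Diff_singleton minus_equation_iff)
qed

lemma sum_AdS_split_element: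
  assumes "finite E" "0 \<notin> E" "i \<in> E"
  shows "(\<Sum>S\<in>AdS E. g S) =
    (\<Sum>S\<in>AdS (E - {i}). g S + g (insert (int i) S) + g (insert (- int i) S))"
proof -
  define A where "A = AdS (E - {i})"
  have "finite A"
    using assms(1) finite_AdS by (simp add: A_def)
  have avoid: "int i \<notin> S" "- int i \<notin> S" if "S \<in> A" for S
    using that AdS_Diff_singletonD by (auto simp: A_def)
  have "i \<noteq> 0"
    using assms by metis
  have inj: "inj_on (insert (int i)) A" "inj_on (insert (- int i)) A"
    unfolding inj_on_def using avoid by (metis insert_ident)+
  have "A \<inter> insert (int i) ` A = {}" "(A \<union> insert (int i) ` A) \<inter> insert (- int i) ` A = {}"
    using avoid \<open>i \<noteq> 0\<close> by fastforce+
  then show ?thesis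
    unfolding AdS_split_element[OF assms(2,3), folded A_def] using \<open>finite A\<close> inj
    by (simp add: sum.union_disjoint sum.reindex sum.distrib A_def)
qed

definition Upoly_term :: "nat \<Rightarrow> int set set \<Rightarrow> 'a::comm_ring_1 \<Rightarrow> 'a \<Rightarrow> int set \<Rightarrow> 'a" where
  "Upoly_term n F u v S = u ^ (n - card S) * v ^ nat ((int (card S) - rank_dm F S) div 2)"

lemma Upoly_eq_sum_Upoly_term: "Upoly E F u v = (\<Sum>S\<in>AdS E. Upoly_term (card E) F u v S)"
  by (simp add: Upoly_def Upoly_term_def)

lemma Upoly_term_Suc:
  assumes "card S \<le> n" "rank_dm F S = rank_dm G S"
  shows "Upoly_term (Suc n) F u v S = u * Upoly_term n G u v S"
  using assms by (simp add: Upoly_term_def Suc_diff_le)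

lemma Upoly_term_insert_rank_up:
  assumes "a \<notin> S" "finite S" "rank_dm F (insert a S) = rank_dm G S + 1"
  shows "Upoly_term (Suc n) F u v (insert a S) = Upoly_term n G u v S"
  using assms by (simp add: Upoly_term_def)

lemma Upoly_term_insert_rank_down:
  assumes "a \<notin> S" "finite S" "rank_dm F (insert a S) = rank_dm G S - 1" "rank_dm G S \<le> int (card S)"
  shows "Upoly_term (Suc n) F u v (insert a S) = v * Upoly_term n G u v S"
proof -
  have "(int (card (insert a S)) - rank_dm F (insert a S)) div 2 = (int (card S) - rank_dm G S) div 2 + 1"
    using assms(1-3) by simp
  moreover have "(int (card S) - rank_dm G S) div 2 \<ge> 0"
    using assms(4) by simp
  ultimately show ?thesis
    using assms(1,2) by (simp add: Upoly_term_def nat_add_distrib)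
qed

lemma Upoly_empty:
  assumes "F \<noteq> {}"
  shows "Upoly {} F u v = 1"
proof -
  have "AdS {} = {{}}"
    by (auto simp: AdS_def admissible_def signed_ground_def)
  then show ?thesis
    using assms by (simp add: Upoly_def rank_dm_def image_constant_conv)
qed

lemma Upoly_term_contract_delete:
  assumes dm: "delta_matroid E F" and "i \<in> E" "\<not> is_loop F i" "\<not> is_coloop F i"
    and "S \<in> AdS (E - {i})"
  shows "Upoly_term (card E) F u v S = u * Upoly_term (card (E - {i})) (dm_proj F i) u v S"
    and "Upoly_term (card E) F u v (insert (int i) S) = Upoly_term (card (E - {i})) (dm_contract F i) u v S"
    and "Upoly_term (card E) F u v (insert (- int i) S) = Upoly_term (card (E - {i})) (dm_delete F i) u v S"
proof -
  have "finite E" "0 \<notin> E"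
    using dm by (auto simp: delta_matroid_def)
  then have "finite S" "card S \<le> card (E - {i})"
    using AdS_finite_card_le[OF _ _ \<open>S \<in> AdS (E - {i})\<close>] by auto
  note S = AdS_Diff_singletonD[OF \<open>S \<in> AdS (E - {i})\<close>]
  note card_E = card_Suc_Diff1[OF \<open>finite E\<close> \<open>i \<in> E\<close>, symmetric]
  have signed: "int i \<in> signed_ground E" "- int i \<in> signed_ground E"
    using \<open>i \<in> E\<close> by (auto simp: signed_ground_def)
  obtain B\<^sub>1 B\<^sub>0 where B: "B\<^sub>1 \<in> F" "int i \<in> B\<^sub>1" "B\<^sub>0 \<in> F" "int i \<notin> B\<^sub>0"
    using assms(3,4) by (auto simp: is_loop_def is_coloop_def)
  then have B_neg: "- int i \<notin> B\<^sub>1" "- int i \<in> B\<^sub>0"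
    using feasible_signed_transversal[OF dm _ signed(1)] by blast+
  have "rank_dm F S = rank_dm (dm_proj F i) S"
    using rank_dm_proj[OF S(2,3)] by simp
  then show "Upoly_term (card E) F u v S = u * Upoly_term (card (E - {i})) (dm_proj F i) u v S"
    unfolding card_E using \<open>card S \<le> card (E - {i})\<close> by (intro Upoly_term_Suc)
  have "rank_dm (dm_contract F i) S = rank_dm {B \<in> F. int i \<in> B} S"
    unfolding dm_contract_def using assms(3,4) S by (simp add: rank_dm_minor)
  then have "rank_dm F (insert (int i) S) = rank_dm (dm_contract F i) S + 1"
    using rank_dm_insert_mixed[OF dm signed(1) S B] by simp
  then show "Upoly_term (card E) F u v (insert (int i) S) = Upoly_term (card (E - {i})) (dm_contract F i) u v S"
    unfolding card_E using S \<open>finite S\<close> by (intro Upoly_term_insert_rank_up)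
  have "rank_dm (dm_delete F i) S = rank_dm {B \<in> F. - int i \<in> B} S"
    unfolding dm_delete_def using assms(3,4) S by (simp add: rank_dm_minor)
  then have "rank_dm F (insert (- int i) S) = rank_dm (dm_delete F i) S + 1"
    using rank_dm_insert_mixed[OF dm signed(2) S(1,3) _ B(3) B_neg(2) B(1) B_neg(1)] S(2) by simp
  then show "Upoly_term (card E) F u v (insert (- int i) S) = Upoly_term (card (E - {i})) (dm_delete F i) u v S"
    unfolding card_E using S \<open>finite S\<close> by (intro Upoly_term_insert_rank_up)
qed

lemma Upoly_contract_delete:
  assumes dm: "delta_matroid E F" and "i \<in> E" "\<not> is_loop F i" "\<not> is_coloop F i"
  shows "Upoly E F u v = Upoly (E - {i}) (dm_contract F i) u v + Upoly (E - {i}) (dm_delete F i) u v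
    + u * Upoly (E - {i}) (dm_proj F i) u v"
proof -
  have "finite E" "0 \<notin> E"
    using dm by (auto simp: delta_matroid_def)
  have "(\<Sum>S\<in>AdS E. Upoly_term (card E) F u v S)
    = (\<Sum>S\<in>AdS (E - {i}). Upoly_term (card (E - {i})) (dm_contract F i) u v S
        + Upoly_term (card (E - {i})) (dm_delete F i) u v S
        + u * Upoly_term (card (E - {i})) (dm_proj F i) u v S)"
    unfolding sum_AdS_split_element[OF \<open>finite E\<close> \<open>0 \<notin> E\<close> \<open>i \<in> E\<close>]
    by (rule sum.cong) (simp_all add: Upoly_term_contract_delete[OF assms] algebra_simps)
  then show ?thesis
    by (simp add: Upoly_eq_sum_Upoly_term sum.distrib sum_distrib_left)
qed

lemma Upoly_term_loop_coloop:
  assumes dm: "delta_matroid E F" and "i \<in> E" and forced: "\<forall>B\<in>F. a \<in> B"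
    and a: "a = int i \<or> a = - int i" and "S \<in> AdS (E - {i})"
  shows "Upoly_term (card E) F u v S = u * Upoly_term (card (E - {i})) (dm_proj F i) u v S"
    and "Upoly_term (card E) F u v (insert a S) = Upoly_term (card (E - {i})) (dm_proj F i) u v S"
    and "Upoly_term (card E) F u v (insert (- a) S) = v * Upoly_term (card (E - {i})) (dm_proj F i) u v S"
proof -
  have "finite E" "0 \<notin> E" "finite F" "F \<noteq> {}"
    using dm delta_matroid_finite by (auto simp: delta_matroid_def)
  then have "finite S" "card S \<le> card (E - {i})"
    using AdS_finite_card_le[OF _ _ \<open>S \<in> AdS (E - {i})\<close>] by auto
  note S = AdS_Diff_singletonD[OF \<open>S \<in> AdS (E - {i})\<close>]
  note card_E = card_Suc_Diff1[OF \<open>finite E\<close> \<open>i \<in> E\<close>, symmetric]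
  have "a \<in> signed_ground E"
    using a \<open>i \<in> E\<close> by (auto simp: signed_ground_def)
  have "a \<notin> S" "- a \<notin> S"
    using a S by auto
  have proj: "rank_dm F S = rank_dm (dm_proj F i) S"
    using rank_dm_proj[OF S(2,3)] by simp
  note forced_rank = rank_dm_insert_forced[OF dm \<open>a \<in> signed_ground E\<close> \<open>a \<notin> S\<close> \<open>- a \<notin> S\<close> forced,
      unfolded proj]
  show "Upoly_term (card E) F u v S = u * Upoly_term (card (E - {i})) (dm_proj F i) u v S"
    unfolding card_E using \<open>card S \<le> card (E - {i})\<close> proj by (intro Upoly_term_Suc)
  show "Upoly_term (card E) F u v (insert a S) = Upoly_term (card (E - {i})) (dm_proj F i) u v S"
    unfolding card_E using \<open>a \<notin> S\<close> \<open>finite S\<close> forced_rank(1) by (intro Upoly_term_insert_rank_up)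
  have "rank_dm (dm_proj F i) S \<le> int (card S)"
    using \<open>finite F\<close> \<open>F \<noteq> {}\<close> \<open>finite S\<close> by (simp add: rank_dm_le_card dm_proj_def)
  then show "Upoly_term (card E) F u v (insert (- a) S) = v * Upoly_term (card (E - {i})) (dm_proj F i) u v S"
    unfolding card_E using \<open>- a \<notin> S\<close> \<open>finite S\<close> forced_rank(2) by (intro Upoly_term_insert_rank_down)
qed

lemma Upoly_loop_coloop:
  assumes dm: "delta_matroid E F" and "i \<in> E" "is_loop F i \<or> is_coloop F i"
  shows "Upoly E F u v = (u + v + 1) * Upoly (E - {i}) (dm_delete F i) u v"
proof -
  have "finite E" "0 \<notin> E"
    using dm by (auto simp: delta_matroid_def)
  have "int i \<in> signed_ground E"
    using \<open>i \<in> E\<close> by (auto simp: signed_ground_def)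
  then obtain a where a: "a = int i \<or> a = - int i" and forced: "\<forall>B\<in>F. a \<in> B"
    using assms(3) feasible_signed_transversal[OF dm] unfolding is_loop_def is_coloop_def by metis
  have "Upoly_term (card E) F u v S + Upoly_term (card E) F u v (insert (int i) S)
      + Upoly_term (card E) F u v (insert (- int i) S)
    = (u + v + 1) * Upoly_term (card (E - {i})) (dm_proj F i) u v S" if "S \<in> AdS (E - {i})" for S
  proof -
    note terms = Upoly_term_loop_coloop[OF dm \<open>i \<in> E\<close> forced a that]
    have "Upoly_term (card E) F u v S + Upoly_term (card E) F u v (insert a S)
        + Upoly_term (card E) F u v (insert (- a) S)
      = (u + v + 1) * Upoly_term (card (E - {i})) (dm_proj F i) u v S"
      by (simp add: terms algebra_simps)
    then show ?thesis
      using a by (elim disjE) (simp_all add: algebra_simps)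
  qed
  then have "(\<Sum>S\<in>AdS E. Upoly_term (card E) F u v S)
    = (\<Sum>S\<in>AdS (E - {i}). (u + v + 1) * Upoly_term (card (E - {i})) (dm_proj F i) u v S)"
    unfolding sum_AdS_split_element[OF \<open>finite E\<close> \<open>0 \<notin> E\<close> \<open>i \<in> E\<close>] by (rule sum.cong[OF refl])
  moreover have "dm_delete F i = dm_proj F i"
    using assms(3) by (simp add: dm_delete_def)
  ultimately show ?thesis
    by (simp add: Upoly_eq_sum_Upoly_term sum_distrib_left)
qed

theorem proposition3p1:
  fixes E :: "nat set" and F :: "int set set" and u v :: "'a::comm_ring_1"
  assumes "delta_matroid E F"
  shows "(E = {} \<longrightarrow> Upoly E F u v = 1) \<and>
         (\<forall>i\<in>E.
            Upoly E F u v =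
              (if \<not> is_loop F i \<and> \<not> is_coloop F i
               then Upoly (E - {i}) (dm_contract F i) u v
                    + Upoly (E - {i}) (dm_delete F i) u v
                    + u * Upoly (E - {i}) (dm_proj F i) u v
               else (u + v + 1) * Upoly (E - {i}) (dm_delete F i) u v))"
proof (intro conjI impI ballI)
  have "F \<noteq> {}"
    using assms by (simp add: delta_matroid_def)
  then show "Upoly E F u v = 1" if "E = {}"
    unfolding that by (rule Upoly_empty)
  show "Upoly E F u v =
          (if \<not> is_loop F i \<and> \<not> is_coloop F i
           then Upoly (E - {i}) (dm_contract F i) u v + Upoly (E - {i}) (dm_delete F i) u v
                + u * Upoly (E - {i}) (dm_proj F i) u v
           else (u + v + 1) * Upoly (E - {i}) (dm_delete F i) u v)" if "i \<in> E" for i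
    using Upoly_contract_delete[OF assms that] Upoly_loop_coloop[OF assms that] by auto
qed

end
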